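(* Let $\mathcal{H}_1=(\mathcal{A}_1,\Delta_{\mathcal{A}_1},S_{\mathcal{A}_1},\varepsilon_{\mathcal{A}_1})$ and $\mathcal{H}_2=(\mathcal{A}_2,\Delta_{\mathcal{A}_2},S_{\mathcal{A}_2},\varepsilon_{\mathcal{A}_2})$ be Hopf algebras over a field $k$, $\mathcal{B}$ a unital $k$-algebra, and $\alpha:\mathcal{A}_1\to\mathcal{B}\otimes\mathcal{A}_2$ a quantum family of homomorphisms from $\mathcal{H}_1$ to $\mathcal{H}_2$. Then for all $a,a'\in\mathcal{A}_1$, \[\alpha(a)_{12}\,\alpha(a')_{13}=\alpha(a')_{13}\,\alpha(a)_{12}\quad\text{in }\mathcal{B}\otimes\mathcal{A}_2\otimes\mathcal{A}_2.\]
   Context: Sweedler notation $\Delta(a)=a_{(1)}\otimes a_{(2)}$. For $x\in\mathcal{B}\otimes\mathcal{A}_2$, $x_{12}$ and $x_{13}$ denote $x$ placed in legs (1,2), resp. (1,3), of $\mathcal{B}\otimes\mathcal{A}_2\otimes\mathcal{A}_2$ with $\mathds{1}$ in the remaining leg. Definition: a unital algebra homomorphism $\alpha:\mathcal{A}_1\to\mathcal{B}\otimes\mathcal{A}_2$ is a quantum family of homomorphisms from $\mathcal{H}_1$ to $\mathcal{H}_2$ if $\alpha(a_{(1)})_{12}\alpha(a_{(2)})_{13}=(\mathrm{id}_{\mathcal{B}}\otimes\Delta_{\mathcal{A}_2})(\alpha(a))$ for all $a\in\mathcal{A}_1$. *)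

theory Defs
  imports Main
begin

text \<open>A k-vector space / k-algebra is modelled on a whole type whose
ring structure comes from the type class and whose scalar multiplication by the
field 'k is an explicit function. Tensor products V \<otimes> W are modelled by
formal sums: a finite list xs of pairs (v,w) stands for the element
sum of v \<otimes> w over xs (scalars are absorbed into the first factor). Two
lists represent the same element of V \<otimes> W iff the difference of their
images in the free k-vector space on V \<times> W lies in the k-span of the
bilinearity relations (the standard construction of the tensor product).\<close>

definition kalg :: "('k::field \<Rightarrow> 'a::ring \<Rightarrow> 'a) \<Rightarrow> bool" where
  "kalg sm \<longleftrightarrow>
     (\<forall>c x y. sm c (x + y) = sm c x + sm c y) \<and>
     (\<forall>c d x. sm (c + d) x = sm c x + sm d x) \<and>
     (\<forall>c d x. sm (c * d) x = sm c (sm d x)) \<and>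
     (\<forall>x. sm 1 x = x) \<and>
     (\<forall>c x y. sm c (x * y) = sm c x * y) \<and>
     (\<forall>c x y. sm c (x * y) = x * sm c y)"

definition unital_kalg :: "('k::field \<Rightarrow> 'a::ring \<Rightarrow> 'a) \<Rightarrow> 'a \<Rightarrow> bool" where
  "unital_kalg sm e \<longleftrightarrow> kalg sm \<and> (\<forall>x. e * x = x \<and> x * e = x)"

definition fvec :: "'x list \<Rightarrow> 'x \<Rightarrow> 'k::field" where
  "fvec xs = (\<lambda>z. of_nat (count_list xs z))"

inductive_set kspan :: "('x \<Rightarrow> 'k::field) set \<Rightarrow> ('x \<Rightarrow> 'k) set" for R where
  zero: "(\<lambda>_. 0) \<in> kspan R"
| gen: "r \<in> R \<Longrightarrow> r \<in> kspan R"
| add: "f \<in> kspan R \<Longrightarrow> g \<in> kspan R \<Longrightarrow> (\<lambda>z. f z + g z) \<in> kspan R"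
| smul: "f \<in> kspan R \<Longrightarrow> (\<lambda>z. c * f z) \<in> kspan R"

definition rel2 :: "('k::field \<Rightarrow> 'v::ab_group_add \<Rightarrow> 'v) \<Rightarrow> ('k \<Rightarrow> 'w::ab_group_add \<Rightarrow> 'w)
                    \<Rightarrow> ('v \<times> 'w \<Rightarrow> 'k) set" where
  "rel2 sv sw =
     {(\<lambda>z. fvec [(v + v', w)] z - fvec [(v, w)] z - fvec [(v', w)] z) | v v' w. True} \<union>
     {(\<lambda>z. fvec [(v, w + w')] z - fvec [(v, w)] z - fvec [(v, w')] z) | v w w'. True} \<union>
     {(\<lambda>z. fvec [(sv c v, w)] z - c * fvec [(v, w)] z) | c v w. True} \<union>
     {(\<lambda>z. fvec [(v, sw c w)] z - c * fvec [(v, w)] z) | c v w. True}"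

definition teq2 :: "('k::field \<Rightarrow> 'v::ab_group_add \<Rightarrow> 'v) \<Rightarrow> ('k \<Rightarrow> 'w::ab_group_add \<Rightarrow> 'w)
                    \<Rightarrow> ('v \<times> 'w) list \<Rightarrow> ('v \<times> 'w) list \<Rightarrow> bool" where
  "teq2 sv sw xs ys \<longleftrightarrow> (\<lambda>z. fvec xs z - fvec ys z) \<in> kspan (rel2 sv sw)"

definition rel3 :: "('k::field \<Rightarrow> 'u::ab_group_add \<Rightarrow> 'u) \<Rightarrow> ('k \<Rightarrow> 'v::ab_group_add \<Rightarrow> 'v)
                    \<Rightarrow> ('k \<Rightarrow> 'w::ab_group_add \<Rightarrow> 'w) \<Rightarrow> ('u \<times> 'v \<times> 'w \<Rightarrow> 'k) set" where
  "rel3 su sv sw =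
     {(\<lambda>z. fvec [(u + u', v, w)] z - fvec [(u, v, w)] z - fvec [(u', v, w)] z) | u u' v w. True} \<union>
     {(\<lambda>z. fvec [(u, v + v', w)] z - fvec [(u, v, w)] z - fvec [(u, v', w)] z) | u v v' w. True} \<union>
     {(\<lambda>z. fvec [(u, v, w + w')] z - fvec [(u, v, w)] z - fvec [(u, v, w')] z) | u v w w'. True} \<union>
     {(\<lambda>z. fvec [(su c u, v, w)] z - c * fvec [(u, v, w)] z) | c u v w. True} \<union>
     {(\<lambda>z. fvec [(u, sv c v, w)] z - c * fvec [(u, v, w)] z) | c u v w. True} \<union>
     {(\<lambda>z. fvec [(u, v, sw c w)] z - c * fvec [(u, v, w)] z) | c u v w. True}"

definition teq3 :: "('k::field \<Rightarrow> 'u::ab_group_add \<Rightarrow> 'u) \<Rightarrow> ('k \<Rightarrow> 'v::ab_group_add \<Rightarrow> 'v)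
                    \<Rightarrow> ('k \<Rightarrow> 'w::ab_group_add \<Rightarrow> 'w)
                    \<Rightarrow> ('u \<times> 'v \<times> 'w) list \<Rightarrow> ('u \<times> 'v \<times> 'w) list \<Rightarrow> bool" where
  "teq3 su sv sw xs ys \<longleftrightarrow> (\<lambda>z. fvec xs z - fvec ys z) \<in> kspan (rel3 su sv sw)"

definition mult2 :: "('a::times \<times> 'b::times) list \<Rightarrow> ('a \<times> 'b) list \<Rightarrow> ('a \<times> 'b) list" where
  "mult2 xs ys = [(a * a', b * b'). (a, b) \<leftarrow> xs, (a', b') \<leftarrow> ys]"

definition mult3 :: "('a::times \<times> 'b::times \<times> 'c::times) list \<Rightarrow> ('a \<times> 'b \<times> 'c) list
                     \<Rightarrow> ('a \<times> 'b \<times> 'c) list" where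
  "mult3 xs ys = [(a * a', b * b', c * c'). (a, b, c) \<leftarrow> xs, (a', b', c') \<leftarrow> ys]"

definition scale2 :: "('k \<Rightarrow> 'a \<Rightarrow> 'a) \<Rightarrow> 'k \<Rightarrow> ('a \<times> 'b) list \<Rightarrow> ('a \<times> 'b) list" where
  "scale2 sm c xs = [(sm c a, b). (a, b) \<leftarrow> xs]"

definition leg12 :: "('b \<times> 'a::one) list \<Rightarrow> ('b \<times> 'a \<times> 'a) list" where
  "leg12 xs = [(b, x, 1). (b, x) \<leftarrow> xs]"

definition leg13 :: "('b \<times> 'a::one) list \<Rightarrow> ('b \<times> 'a \<times> 'a) list" where
  "leg13 xs = [(b, 1, x). (b, x) \<leftarrow> xs]"

definition id_tensor :: "('a \<Rightarrow> ('c \<times> 'd) list) \<Rightarrow> ('b \<times> 'a) list \<Rightarrow> ('b \<times> 'c \<times> 'd) list" where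
  "id_tensor D xs = concat [[(b, y, z). (y, z) \<leftarrow> D x]. (b, x) \<leftarrow> xs]"

definition tensor_id :: "('a \<Rightarrow> ('c \<times> 'd) list) \<Rightarrow> ('a \<times> 'b) list \<Rightarrow> ('c \<times> 'd \<times> 'b) list" where
  "tensor_id D xs = concat [[(y, z, b). (y, z) \<leftarrow> D x]. (x, b) \<leftarrow> xs]"

definition hopf_algebra :: "('k::field \<Rightarrow> 'a::ring_1 \<Rightarrow> 'a) \<Rightarrow> ('a \<Rightarrow> ('a \<times> 'a) list)
                            \<Rightarrow> ('a \<Rightarrow> 'a) \<Rightarrow> ('a \<Rightarrow> 'k) \<Rightarrow> bool" where
  "hopf_algebra sm D S eps \<longleftrightarrow>
     kalg sm \<and>
     \<comment> \<open>comultiplication is a unital algebra homomorphism A \<rightarrow> A \<otimes> A\<close>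
     (\<forall>x y. teq2 sm sm (D (x + y)) (D x @ D y)) \<and>
     (\<forall>c x. teq2 sm sm (D (sm c x)) (scale2 sm c (D x))) \<and>
     (\<forall>x y. teq2 sm sm (D (x * y)) (mult2 (D x) (D y))) \<and>
     teq2 sm sm (D 1) [(1, 1)] \<and>
     \<comment> \<open>coassociativity\<close>
     (\<forall>x. teq3 sm sm sm (tensor_id D (D x)) (id_tensor D (D x))) \<and>
     \<comment> \<open>counit is a unital algebra homomorphism A \<rightarrow> k\<close>
     (\<forall>x y. eps (x + y) = eps x + eps y) \<and>
     (\<forall>c x. eps (sm c x) = c * eps x) \<and>
     (\<forall>x y. eps (x * y) = eps x * eps y) \<and>
     eps 1 = 1 \<and>
     \<comment> \<open>counit axioms\<close>
     (\<forall>x. sum_list [sm (eps a) b. (a, b) \<leftarrow> D x] = x) \<and>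
     (\<forall>x. sum_list [sm (eps b) a. (a, b) \<leftarrow> D x] = x) \<and>
     \<comment> \<open>antipode: k-linear with m(S \<otimes> id)\<Delta> = \<eta>\<epsilon> = m(id \<otimes> S)\<Delta>\<close>
     (\<forall>x y. S (x + y) = S x + S y) \<and>
     (\<forall>c x. S (sm c x) = sm c (S x)) \<and>
     (\<forall>x. sum_list [S a * b. (a, b) \<leftarrow> D x] = sm (eps x) 1) \<and>
     (\<forall>x. sum_list [a * S b. (a, b) \<leftarrow> D x] = sm (eps x) 1)"

definition quantum_family_hom ::
  "('k::field \<Rightarrow> 'a1::ring_1 \<Rightarrow> 'a1) \<Rightarrow> ('a1 \<Rightarrow> ('a1 \<times> 'a1) list)
   \<Rightarrow> ('k \<Rightarrow> 'b::ring \<Rightarrow> 'b) \<Rightarrow> 'b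
   \<Rightarrow> ('k \<Rightarrow> 'a2::ring_1 \<Rightarrow> 'a2) \<Rightarrow> ('a2 \<Rightarrow> ('a2 \<times> 'a2) list)
   \<Rightarrow> ('a1 \<Rightarrow> ('b \<times> 'a2) list) \<Rightarrow> bool" where
  "quantum_family_hom sm1 D1 smB oneB sm2 D2 \<alpha> \<longleftrightarrow>
     \<comment> \<open>unital algebra homomorphism A1 \<rightarrow> B \<otimes> A2\<close>
     (\<forall>x y. teq2 smB sm2 (\<alpha> (x + y)) (\<alpha> x @ \<alpha> y)) \<and>
     (\<forall>c x. teq2 smB sm2 (\<alpha> (sm1 c x)) (scale2 smB c (\<alpha> x))) \<and>
     (\<forall>x y. teq2 smB sm2 (\<alpha> (x * y)) (mult2 (\<alpha> x) (\<alpha> y))) \<and>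
     teq2 smB sm2 (\<alpha> 1) [(oneB, 1)] \<and>
     \<comment> \<open>\<alpha>(a_(1))_12 \<alpha>(a_(2))_13 = (id \<otimes> \<Delta>2)(\<alpha>(a))\<close>
     (\<forall>a. teq3 smB sm2 sm2
            (concat [mult3 (leg12 (\<alpha> a1)) (leg13 (\<alpha> a2)). (a1, a2) \<leftarrow> D1 a])
            (id_tensor D2 (\<alpha> a)))"

end

theory Submission
  imports Defs "HOL-Library.Multiset"
begin

text \<open>Write \<open>x\<^sub>1\<^sub>2\<close> and \<open>x\<^sub>1\<^sub>3\<close> for the two legs of \<open>\<alpha>(x)\<close> and \<open>T(x) = (id \<otimes> \<Delta>)(\<alpha>(x))\<close>, so that
  the hypothesis reads \<open>T(a) = \<Sigma> a(1)\<^sub>1\<^sub>2 a(2)\<^sub>1\<^sub>3\<close>. Both legs are algebra homomorphisms, so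
  coassociativity and the antipode invert the hypothesis: \<open>a\<^sub>1\<^sub>3 = \<Sigma> (S a(1))\<^sub>1\<^sub>2 T(a(2))\<close> and
  \<open>a\<^sub>1\<^sub>2 = \<Sigma> T(a(1)) (S a(2))\<^sub>1\<^sub>3\<close>. As \<open>T\<close> is multiplicative,
  \<open>a\<^sub>1\<^sub>3 a'\<^sub>1\<^sub>2 = \<Sigma> (S a(1))\<^sub>1\<^sub>2 T(a(2) a'(1)) (S a'(2))\<^sub>1\<^sub>3\<close>, and expanding the middle factor by
  the hypothesis gives \<open>\<Sigma> (S a(1))\<^sub>1\<^sub>2 a(2)\<^sub>1\<^sub>2 a'(1)\<^sub>1\<^sub>2 a(3)\<^sub>1\<^sub>3 a'(2)\<^sub>1\<^sub>3 (S a'(3))\<^sub>1\<^sub>3\<close>. The antipode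
  cancels the first two and the last two factors, leaving \<open>a'\<^sub>1\<^sub>2 a\<^sub>1\<^sub>3\<close>.

  Elements of tensor products are formal sums modulo the span of the multilinearity relations,
  so every map above is defined on formal sums and shown to respect these relations, by extending
  it linearly to the free vector space.\<close>

section \<open>Formal sums modulo a span of relations\<close>

definition span_eq :: "('y \<Rightarrow> 'k::field) set \<Rightarrow> 'y list \<Rightarrow> 'y list \<Rightarrow> bool" where
  "span_eq R xs ys \<longleftrightarrow> (\<lambda>z. fvec xs z - fvec ys z) \<in> kspan R"

definition span_eq_scaled :: "('y \<Rightarrow> 'k::field) set \<Rightarrow> 'k \<Rightarrow> 'y list \<Rightarrow> 'y list \<Rightarrow> bool" where
  "span_eq_scaled R c xs ys \<longleftrightarrow> (\<lambda>z. fvec xs z - c * fvec ys z) \<in> kspan R"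

text \<open>Linear extension of \<open>g\<close> to the free vector space; meaningful only for finitely
  supported \<open>f\<close>, otherwise the sum is \<open>0\<close>.\<close>
definition lin_ext :: "('x \<Rightarrow> 'y list) \<Rightarrow> ('x \<Rightarrow> 'k) \<Rightarrow> 'y \<Rightarrow> 'k::field" where
  "lin_ext g f = (\<lambda>w. \<Sum>z\<in>{z. f z \<noteq> 0}. f z * fvec (g z) w)"

lemma teq2_eq_span_eq: "teq2 su sv = span_eq (rel2 su sv)"
  by (simp add: fun_eq_iff teq2_def span_eq_def)

lemma teq3_eq_span_eq: "teq3 su sv sw = span_eq (rel3 su sv sw)"
  by (simp add: fun_eq_iff teq3_def span_eq_def)

lemma fvec_Nil[simp]: "fvec [] z = 0"
  by (simp add: fvec_def)

lemma fvec_append[simp]: "fvec (xs @ ys) z = fvec xs z + fvec ys z"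
  by (simp add: fvec_def)

lemma fvec_Cons: "fvec (x # xs) z = fvec [x] z + fvec xs z"
  by (simp add: fvec_def)

lemma fvec_single: "fvec [x] z = (if x = z then 1 else 0)"
  by (simp add: fvec_def)

lemma fvec_eq_if_mset_eq: "mset xs = mset ys \<Longrightarrow> fvec xs = fvec ys"
  unfolding fvec_def by (rule ext) (metis count_mset)

lemma finite_fvec_support: "finite {z. fvec xs z \<noteq> (0::'k::field)}"
proof (rule finite_subset)
  show "{z. fvec xs z \<noteq> (0::'k)} \<subseteq> set xs"
    using count_notin by (fastforce simp: fvec_def)
qed simp

lemma finite_support_add:
  "finite {z. f z \<noteq> 0} \<Longrightarrow> finite {z. h z \<noteq> 0} \<Longrightarrow> finite {z. f z + h z \<noteq> (0::'k::field)}"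
  by (rule finite_subset[of _ "{z. f z \<noteq> 0} \<union> {z. h z \<noteq> 0}"]) auto

lemma finite_support_diff:
  "finite {z. f z \<noteq> 0} \<Longrightarrow> finite {z. h z \<noteq> 0} \<Longrightarrow> finite {z. f z - h z \<noteq> (0::'k::field)}"
  by (rule finite_subset[of _ "{z. f z \<noteq> 0} \<union> {z. h z \<noteq> 0}"]) auto

lemma finite_support_smul: "finite {z. f z \<noteq> 0} \<Longrightarrow> finite {z. c * f z \<noteq> (0::'k::field)}"
  by (rule finite_subset[of _ "{z. f z \<noteq> 0}"]) auto

lemma lin_ext_eq_sum:
  assumes "finite U" "{z. f z \<noteq> 0} \<subseteq> U"
  shows "lin_ext g f w = (\<Sum>z\<in>U. f z * fvec (g z) w)"
  unfolding lin_ext_def by (rule sum.mono_neutral_left) (use assms in auto)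

lemma lin_ext_add:
  assumes "finite {z. f z \<noteq> 0}" "finite {z. h z \<noteq> 0}"
  shows "lin_ext g (\<lambda>z. f z + h z) = (\<lambda>w. lin_ext g f w + lin_ext g h w)"
proof
  fix w
  let ?U = "{z. f z \<noteq> 0} \<union> {z. h z \<noteq> 0}"
  have "lin_ext g (\<lambda>z. f z + h z) w = (\<Sum>z\<in>?U. (f z + h z) * fvec (g z) w)"
    by (rule lin_ext_eq_sum) (use assms in auto)
  also have "\<dots> = (\<Sum>z\<in>?U. f z * fvec (g z) w) + (\<Sum>z\<in>?U. h z * fvec (g z) w)"
    by (simp add: distrib_right sum.distrib)
  also have "\<dots> = lin_ext g f w + lin_ext g h w"
    by (subst (1 2) lin_ext_eq_sum[of ?U]) (use assms in auto)
  finally show "lin_ext g (\<lambda>z. f z + h z) w = lin_ext g f w + lin_ext g h w" .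
qed

lemma lin_ext_diff:
  assumes "finite {z. f z \<noteq> 0}" "finite {z. h z \<noteq> 0}"
  shows "lin_ext g (\<lambda>z. f z - h z) = (\<lambda>w. lin_ext g f w - lin_ext g h w)"
proof
  fix w
  let ?U = "{z. f z \<noteq> 0} \<union> {z. h z \<noteq> 0}"
  have "lin_ext g (\<lambda>z. f z - h z) w = (\<Sum>z\<in>?U. (f z - h z) * fvec (g z) w)"
    by (rule lin_ext_eq_sum) (use assms in auto)
  also have "\<dots> = (\<Sum>z\<in>?U. f z * fvec (g z) w) - (\<Sum>z\<in>?U. h z * fvec (g z) w)"
    by (simp add: left_diff_distrib sum_subtractf)
  also have "\<dots> = lin_ext g f w - lin_ext g h w"
    by (subst (1 2) lin_ext_eq_sum[of ?U]) (use assms in auto)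
  finally show "lin_ext g (\<lambda>z. f z - h z) w = lin_ext g f w - lin_ext g h w" .
qed

lemma lin_ext_smul:
  assumes "finite {z. f z \<noteq> 0}"
  shows "lin_ext g (\<lambda>z. c * f z) = (\<lambda>w. c * lin_ext g f w)"
proof
  fix w
  have "lin_ext g (\<lambda>z. c * f z) w = (\<Sum>z\<in>{z. f z \<noteq> 0}. (c * f z) * fvec (g z) w)"
    by (rule lin_ext_eq_sum) (use assms in auto)
  also have "\<dots> = c * lin_ext g f w"
    by (simp add: lin_ext_def sum_distrib_left mult.assoc)
  finally show "lin_ext g (\<lambda>z. c * f z) w = c * lin_ext g f w" .
qed

lemma lin_ext_zero: "lin_ext g (\<lambda>_. 0) = (\<lambda>w. 0)"
  by (simp add: lin_ext_def)

lemma lin_ext_fvec: "lin_ext g (fvec xs) = fvec (concat (map g xs))"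
proof (induction xs)
  case Nil
  then show ?case using lin_ext_zero[of g] by (simp add: fvec_def[symmetric] fun_eq_iff)
next
  case (Cons x xs)
  have single: "lin_ext g (fvec [x]) = fvec (g x)"
  proof
    fix w show "lin_ext g (fvec [x]) w = fvec (g x) w"
      by (subst lin_ext_eq_sum[of "{x}"]) (auto simp: fvec_single)
  qed
  have Cons_eq: "fvec (x # xs) = (\<lambda>z. fvec [x] z + fvec xs z)"
    by (rule ext, rule fvec_Cons)
  show ?case
    unfolding Cons_eq lin_ext_add[OF finite_fvec_support finite_fvec_support, of g "[x]" xs] single Cons.IH
    by (simp add: fun_eq_iff)
qed

lemma kspan_finite_support:
  assumes "\<forall>r\<in>R. finite {z. r z \<noteq> 0}" "f \<in> kspan R"
  shows "finite {z. f z \<noteq> 0}"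
  using assms(2) by induction (use assms(1) finite_support_add finite_support_smul in auto)

lemma lin_ext_kspan:
  assumes "\<forall>r\<in>R. finite {z. r z \<noteq> 0}" "\<forall>r\<in>R. lin_ext g r \<in> kspan R'" "f \<in> kspan R"
  shows "lin_ext g f \<in> kspan R'"
  using assms(3)
proof induction
  case zero
  then show ?case by (simp add: lin_ext_zero kspan.zero)
next
  case (gen r)
  then show ?case using assms(2) by auto
next
  case (add f h)
  then show ?case using kspan_finite_support[OF assms(1)] by (simp add: lin_ext_add kspan.add)
next
  case (smul f c)
  then show ?case using kspan_finite_support[OF assms(1)] by (simp add: lin_ext_smul kspan.smul)
qed

lemma span_eq_refl[simp]: "span_eq R xs xs"
  by (simp add: span_eq_def kspan.zero)

lemma span_eq_sym: "span_eq R xs ys \<Longrightarrow> span_eq R ys xs"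
  unfolding span_eq_def by (drule kspan.smul[where c="-1"]) (simp add: algebra_simps)

lemma span_eq_trans[trans]: "span_eq R xs ys \<Longrightarrow> span_eq R ys zs \<Longrightarrow> span_eq R xs zs"
  unfolding span_eq_def by (drule (1) kspan.add) simp

lemma span_eq_append:
  "span_eq R xs ys \<Longrightarrow> span_eq R xs' ys' \<Longrightarrow> span_eq R (xs @ xs') (ys @ ys')"
  unfolding span_eq_def by (drule (1) kspan.add) (simp add: algebra_simps)

lemma span_eq_if_mset_eq:
  fixes R :: "('y \<Rightarrow> 'k::field) set"
  assumes "mset xs = mset ys"
  shows "span_eq R xs ys"
proof -
  have "fvec xs = (fvec ys :: 'y \<Rightarrow> 'k)" by (rule fvec_eq_if_mset_eq[OF assms])
  then show ?thesis by (simp add: span_eq_def kspan.zero)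
qed

lemma span_eq_concat_map:
  "(\<And>x. x \<in> set xs \<Longrightarrow> span_eq R (f x) (g x)) \<Longrightarrow> span_eq R (concat (map f xs)) (concat (map g xs))"
  by (induction xs) (auto intro: span_eq_append)

lemma span_eq_concat_map_swap:
  fixes R :: "('y \<Rightarrow> 'k::field) set"
  shows "span_eq R (concat (map (\<lambda>x. concat (map (f x) ys)) xs))
             (concat (map (\<lambda>y. concat (map (\<lambda>x. f x y) xs)) ys))"
proof (rule span_eq_if_mset_eq)
  have mset_append: "mset (concat (map (\<lambda>y. g y @ h y) ys)) =
      mset (concat (map g ys)) + mset (concat (map h ys))" for g h :: "_ \<Rightarrow> 'y list"
    by (induction ys) auto
  show "mset (concat (map (\<lambda>x. concat (map (f x) ys)) xs)) =
      mset (concat (map (\<lambda>y. concat (map (\<lambda>x. f x y) xs)) ys))"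
    by (induction xs) (auto simp: mset_append)
qed

lemma span_eq_relation:
  "(\<lambda>z. fvec [x] z - fvec [y] z - fvec [y'] z) \<in> R \<Longrightarrow> span_eq R [x] [y, y']"
  unfolding span_eq_def by (drule kspan.gen) (simp add: fvec_Cons[of y "[y']"] diff_diff_eq)

lemma span_eq_map_add:
  "(\<And>p. p \<in> set xs \<Longrightarrow> span_eq R [f p] [g p, h p]) \<Longrightarrow> span_eq R (map f xs) (map g xs @ map h xs)"
proof (induction xs)
  case (Cons p xs)
  have "span_eq R ([f p] @ map f xs) ([g p, h p] @ (map g xs @ map h xs))"
    using Cons by (intro span_eq_append) auto
  also have "span_eq R \<dots> (map g (p # xs) @ map h (p # xs))"
    by (rule span_eq_if_mset_eq) simp
  finally show ?case by simp
qed simp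

lemma span_eq_scaled_relation:
  "(\<lambda>z. fvec [x] z - c * fvec [y] z) \<in> R \<Longrightarrow> span_eq_scaled R c [x] [y]"
  unfolding span_eq_scaled_def by (rule kspan.gen)

lemma span_eq_scaled_Nil[simp]: "span_eq_scaled R c [] []"
  by (simp add: span_eq_scaled_def kspan.zero)

lemma span_eq_scaled_append:
  "span_eq_scaled R c xs ys \<Longrightarrow> span_eq_scaled R c xs' ys' \<Longrightarrow>
   span_eq_scaled R c (xs @ xs') (ys @ ys')"
  unfolding span_eq_scaled_def by (drule (1) kspan.add) (simp add: algebra_simps)

lemma span_eq_scaled_map:
  "(\<And>p. p \<in> set xs \<Longrightarrow> span_eq_scaled R c [f p] [g p]) \<Longrightarrow> span_eq_scaled R c (map f xs) (map g xs)"
proof (induction xs)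
  case (Cons p xs)
  have "span_eq_scaled R c ([f p] @ map f xs) ([g p] @ map g xs)"
    using Cons by (intro span_eq_scaled_append) auto
  then show ?case by simp
qed simp

lemma span_eq_scaled_trans_left:
  "span_eq R xs xs' \<Longrightarrow> span_eq_scaled R c xs' ys \<Longrightarrow> span_eq_scaled R c xs ys"
  unfolding span_eq_scaled_def span_eq_def by (drule (1) kspan.add) (simp add: algebra_simps)

lemma span_eq_scaled_trans_right:
  "span_eq R ys' ys \<Longrightarrow> span_eq_scaled R c xs ys' \<Longrightarrow> span_eq_scaled R c xs ys"
  unfolding span_eq_scaled_def span_eq_def
  by (drule kspan.smul[where c=c], drule (1) kspan.add) (simp add: algebra_simps)

lemma span_eq_if_scaled_eq:
  "span_eq_scaled R c xs zs \<Longrightarrow> span_eq_scaled R c ys zs \<Longrightarrow> span_eq R xs ys"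
  unfolding span_eq_scaled_def span_eq_def
  by (drule kspan.smul[where c="-1"], drule (1) kspan.add) (simp add: algebra_simps)

lemma span_eq_concat_map_if_relations:
  assumes "\<forall>r\<in>R. finite {z. r z \<noteq> 0}" "\<forall>r\<in>R. lin_ext g r \<in> kspan R'" "span_eq R xs ys"
  shows "span_eq R' (concat (map g xs)) (concat (map g ys))"
  using lin_ext_kspan[OF assms(1,2) assms(3)[unfolded span_eq_def]]
  by (simp add: span_eq_def lin_ext_diff finite_fvec_support lin_ext_fvec)

lemma lin_ext_additivity_relation:
  assumes "span_eq R (g x) (g y @ g y')"
  shows "lin_ext g (\<lambda>z. fvec [x] z - fvec [y] z - fvec [y'] z) \<in> kspan R"
  using assms unfolding span_eq_def
  by (simp only: lin_ext_diff finite_support_diff finite_fvec_support lin_ext_fvec)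
    (simp add: diff_diff_eq)

lemma lin_ext_homogeneity_relation:
  assumes "span_eq_scaled R c (g x) (g y)"
  shows "lin_ext g (\<lambda>z. fvec [x] z - c * fvec [y] z) \<in> kspan R"
  using assms unfolding span_eq_scaled_def
  by (simp only: lin_ext_diff finite_support_smul finite_fvec_support lin_ext_fvec lin_ext_smul)
    simp

lemma teq2_concat_map:
  assumes "teq2 su sv xs ys"
    and "\<And>u u' v. span_eq R (g (u + u', v)) (g (u, v) @ g (u', v))"
    and "\<And>u v v'. span_eq R (g (u, v + v')) (g (u, v) @ g (u, v'))"
    and "\<And>c u v. span_eq_scaled R c (g (su c u, v)) (g (u, v))"
    and "\<And>c u v. span_eq_scaled R c (g (u, sv c v)) (g (u, v))"
  shows "span_eq R (concat (map g xs)) (concat (map g ys))"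
proof (rule span_eq_concat_map_if_relations)
  show "span_eq (rel2 su sv) xs ys" using assms(1) by (simp add: teq2_eq_span_eq)
  show "\<forall>r\<in>rel2 su sv. finite {z. r z \<noteq> 0}"
    by (auto simp: rel2_def intro!: finite_support_diff finite_support_smul finite_fvec_support)
  show "\<forall>r\<in>rel2 su sv. lin_ext g r \<in> kspan R"
    unfolding rel2_def
    by (auto intro!: lin_ext_additivity_relation lin_ext_homogeneity_relation assms(2-5))
qed

lemma teq3_concat_map:
  assumes "teq3 su sv sw xs ys"
    and "\<And>u u' v w. span_eq R (g (u + u', v, w)) (g (u, v, w) @ g (u', v, w))"
    and "\<And>u v v' w. span_eq R (g (u, v + v', w)) (g (u, v, w) @ g (u, v', w))"
    and "\<And>u v w w'. span_eq R (g (u, v, w + w')) (g (u, v, w) @ g (u, v, w'))"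
    and "\<And>c u v w. span_eq_scaled R c (g (su c u, v, w)) (g (u, v, w))"
    and "\<And>c u v w. span_eq_scaled R c (g (u, sv c v, w)) (g (u, v, w))"
    and "\<And>c u v w. span_eq_scaled R c (g (u, v, sw c w)) (g (u, v, w))"
  shows "span_eq R (concat (map g xs)) (concat (map g ys))"
proof (rule span_eq_concat_map_if_relations)
  show "span_eq (rel3 su sv sw) xs ys" using assms(1) by (simp add: teq3_eq_span_eq)
  show "\<forall>r\<in>rel3 su sv sw. finite {z. r z \<noteq> 0}"
    by (auto simp: rel3_def intro!: finite_support_diff finite_support_smul finite_fvec_support)
  show "\<forall>r\<in>rel3 su sv sw. lin_ext g r \<in> kspan R"
    unfolding rel3_def
    by (auto intro!: lin_ext_additivity_relation lin_ext_homogeneity_relation assms(2-7))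
qed

lemma mult3_single_left: "mult3 [(a, b, c)] zs = map (\<lambda>(a', b', c'). (a * a', b * b', c * c')) zs"
  by (induction zs) (auto simp: mult3_def)

lemma mult3_single_right: "mult3 zs [(a, b, c)] = map (\<lambda>(a', b', c'). (a' * a, b' * b, c' * c)) zs"
  by (induction zs) (auto simp: mult3_def)

lemma mult3_Nil_left[simp]: "mult3 [] zs = []"
  by (simp add: mult3_def)

lemma mult3_Nil_right[simp]: "mult3 xs [] = []"
  by (induction xs) (auto simp: mult3_def)

lemma mult3_Cons_left: "mult3 (p # xs) zs = mult3 [p] zs @ mult3 xs zs"
  by (cases p) (simp add: mult3_def)

lemma mult3_append_left: "mult3 (xs @ ys) zs = mult3 xs zs @ mult3 ys zs"
  by (induction xs) (simp, metis append_assoc append_Cons mult3_Cons_left)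

lemma mset_mult3_append_right: "mset (mult3 xs (ys @ zs)) = mset (mult3 xs ys @ mult3 xs zs)"
  by (induction xs) (auto simp: mult3_def)

lemma mult3_concat_map_left: "mult3 (concat (map f xs)) zs = concat (map (\<lambda>x. mult3 (f x) zs) xs)"
  by (induction xs) (auto simp: mult3_append_left)

lemma mset_mult3_concat_map_right:
  "mset (mult3 zs (concat (map f xs))) = mset (concat (map (\<lambda>x. mult3 zs (f x)) xs))"
  by (induction xs) (auto simp: mset_mult3_append_right)

lemma mult3_eq_concat_left: "mult3 xs zs = concat (map (\<lambda>p. mult3 [p] zs) xs)"
  by (induction xs) (simp, metis concat.simps(2) list.simps(9) mult3_Cons_left)

lemma mset_mult3_eq_concat_right: "mset (mult3 zs xs) = mset (concat (map (\<lambda>p. mult3 zs [p]) xs))"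
proof (induction xs)
  case (Cons p xs)
  have "mset (mult3 zs (p # xs)) = mset (mult3 zs [p] @ mult3 zs xs)"
    using mset_mult3_append_right[of zs "[p]" xs] by simp
  then show ?case using Cons by simp
qed simp

lemma mult3_single_append: "mult3 [p] (xs @ ys) = mult3 [p] xs @ mult3 [p] ys"
  by (cases p) (simp add: mult3_single_left)

lemma mult3_single_assoc:
  fixes zs :: "('a::semigroup_mult \<times> 'b::semigroup_mult \<times> 'c::semigroup_mult) list"
  shows "mult3 (mult3 [p] ys) zs = mult3 [p] (mult3 ys zs)"
proof (induction ys)
  case (Cons q ys)
  have single: "mult3 (mult3 [p] [q]) zs = mult3 [p] (mult3 [q] zs)"
    by (cases p, cases q) (simp add: mult3_single_left comp_def split_beta mult.assoc)
  have split_p: "mult3 [p] (q # ys) = mult3 [p] [q] @ mult3 [p] ys"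
    by (cases p) (simp add: mult3_single_left)
  have split_q: "mult3 (q # ys) zs = mult3 [q] zs @ mult3 ys zs"
    by (rule mult3_Cons_left)
  show ?case
    by (simp only: split_p split_q mult3_append_left mult3_single_append single Cons)
qed simp

lemma mult3_assoc:
  fixes zs :: "('a::semigroup_mult \<times> 'b::semigroup_mult \<times> 'c::semigroup_mult) list"
  shows "mult3 (mult3 xs ys) zs = mult3 xs (mult3 ys zs)"
proof (induction xs)
  case (Cons p xs)
  have split_l: "mult3 (p # xs) ys = mult3 [p] ys @ mult3 xs ys"
    and split_r: "mult3 (p # xs) (mult3 ys zs) = mult3 [p] (mult3 ys zs) @ mult3 xs (mult3 ys zs)"
    by (rule mult3_Cons_left)+
  show ?case
    by (simp only: split_l split_r mult3_append_left mult3_single_assoc Cons)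
qed simp

lemma mult3_unit_left:
  assumes "\<And>x. e * x = x"
  shows "mult3 [(e, 1, 1)] (xs :: ('a::times \<times> 'b::monoid_mult \<times> 'c::monoid_mult) list) = xs"
  by (simp add: mult3_single_left split_beta assms)

lemma mult3_unit_right:
  assumes "\<And>x. x * e = x"
  shows "mult3 (xs :: ('a::times \<times> 'b::monoid_mult \<times> 'c::monoid_mult) list) [(e, 1, 1)] = xs"
  by (simp add: mult3_single_right split_beta assms)

lemma mult2_eq_concat_map:
  "mult2 xs ys = concat (map (\<lambda>p. map (\<lambda>q. (fst p * fst q, snd p * snd q)) ys) xs)"
  by (simp add: mult2_def case_prod_unfold)

lemma concat_map_case_single: "concat (map (\<lambda>(b, x). [f b x]) xs) = map (\<lambda>(b, x). f b x) xs"
  by (induction xs) auto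

lemma concat_concat_map_map:
  "concat (concat (map (\<lambda>x. map (f x) ys) xs)) = concat (map (\<lambda>x. concat (map (f x) ys)) xs)"
  by (induction xs) auto

lemma mult2_prefix:
  "map (\<lambda>(y, z). (b * b', y, z)) (mult2 xs ys) =
   mult3 (map (\<lambda>(y, z). (b, y, z)) xs) (map (\<lambda>(y, z). (b', y, z)) ys)"
  by (simp add: mult2_def mult3_def split_beta map_concat comp_def)

lemma leg12_append: "leg12 (xs @ ys) = leg12 xs @ leg12 ys"
  by (simp add: leg12_def)

lemma leg13_append: "leg13 (xs @ ys) = leg13 xs @ leg13 ys"
  by (simp add: leg13_def)

lemma leg12_mult2: "leg12 (mult2 xs (ys :: ('b::times \<times> 'a::monoid_mult) list)) = mult3 (leg12 xs) (leg12 ys)"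
  by (simp add: leg12_def mult2_def mult3_def split_beta map_concat comp_def)

lemma leg13_mult2: "leg13 (mult2 xs (ys :: ('b::times \<times> 'a::monoid_mult) list)) = mult3 (leg13 xs) (leg13 ys)"
  by (simp add: leg13_def mult2_def mult3_def split_beta map_concat comp_def)

definition id_tensor_simple :: "('a \<Rightarrow> ('c \<times> 'd) list) \<Rightarrow> 'b \<times> 'a \<Rightarrow> ('b \<times> 'c \<times> 'd) list" where
  "id_tensor_simple D p = map (\<lambda>(y, z). (fst p, y, z)) (D (snd p))"

lemma id_tensor_simple_Pair: "id_tensor_simple D (b, x) = map (\<lambda>(y, z). (b, y, z)) (D x)"
  by (simp add: id_tensor_simple_def)

lemma id_tensor_eq_concat_map: "id_tensor D xs = concat (map (id_tensor_simple D) xs)"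
  unfolding id_tensor_def id_tensor_simple_def[abs_def] by (induction xs) auto

lemma concat_map_id_tensor:
  "concat (map g (id_tensor D xs)) =
   concat (map (\<lambda>(u, v). concat (map (\<lambda>(y, z). g (u, y, z)) (D v))) xs)"
proof -
  have "concat (map g (map (\<lambda>(y, z). (u, y, z)) ys)) = concat (map (\<lambda>(y, z). g (u, y, z)) ys)"
    for u ys by (induction ys) auto
  then show ?thesis by (induction xs) (auto simp: id_tensor_def comp_def)
qed

lemma concat_map_tensor_id:
  "concat (map g (tensor_id D xs)) =
   concat (map (\<lambda>(u, v). concat (map (\<lambda>(y, z). g (y, z, v)) (D u))) xs)"
proof -
  have "concat (map g (map (\<lambda>(y, z). (y, z, v)) ys)) = concat (map (\<lambda>(y, z). g (y, z, v)) ys)"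
    for v ys by (induction ys) auto
  then show ?thesis by (induction xs) (auto simp: tensor_id_def comp_def case_prod_unfold)
qed

lemma kalg_zero_smul:
  assumes "kalg sm"
  shows "sm 0 x = 0"
proof -
  have "sm (0 + 0) x = sm 0 x + sm 0 x"
    using assms unfolding kalg_def by blast
  then show ?thesis by simp
qed

section \<open>The algebra \<open>B \<otimes> A \<otimes> A\<close>\<close>

locale tensor3_algebra =
  fixes smB :: "'k::field \<Rightarrow> 'b::ring \<Rightarrow> 'b" and smA :: "'k \<Rightarrow> 'a::ring_1 \<Rightarrow> 'a"
  assumes kalg_smB: "kalg smB" and kalg_smA: "kalg smA"
begin

abbreviation R3 where "R3 \<equiv> rel3 smB smA smA"
abbreviation tensor3_eq (infix "\<approx>" 50) where "xs \<approx> ys \<equiv> span_eq R3 xs ys"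

lemma smB_mult_left: "smB c (x * y) = smB c x * y"
  using kalg_smB unfolding kalg_def by metis

lemma smB_mult_right: "smB c (x * y) = x * smB c y"
  using kalg_smB unfolding kalg_def by metis

lemma smA_mult_left: "smA c (x * y) = smA c x * y"
  using kalg_smA unfolding kalg_def by metis

lemma smA_mult_right: "smA c (x * y) = x * smA c y"
  using kalg_smA unfolding kalg_def by metis

lemma add_leg1: "[(u + u', v, w)] \<approx> [(u, v, w), (u', v, w)]"
  by (rule span_eq_relation) (unfold rel3_def, rule UnI1, rule UnI1, rule UnI1, rule UnI1,
      rule UnI1, blast)

lemma add_leg2: "[(u, v + v', w)] \<approx> [(u, v, w), (u, v', w)]"
  by (rule span_eq_relation) (unfold rel3_def, rule UnI1, rule UnI1, rule UnI1, rule UnI1,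
      rule UnI2, blast)

lemma add_leg3: "[(u, v, w + w')] \<approx> [(u, v, w), (u, v, w')]"
  by (rule span_eq_relation) (unfold rel3_def, rule UnI1, rule UnI1, rule UnI1, rule UnI2, blast)

lemma smul_leg1: "span_eq_scaled R3 c [(smB c u, v, w)] [(u, v, w)]"
  by (rule span_eq_scaled_relation) (unfold rel3_def, rule UnI1, rule UnI1, rule UnI2, blast)

lemma smul_leg2: "span_eq_scaled R3 c [(u, smA c v, w)] [(u, v, w)]"
  by (rule span_eq_scaled_relation) (unfold rel3_def, rule UnI1, rule UnI2, blast)

lemma smul_leg3: "span_eq_scaled R3 c [(u, v, smA c w)] [(u, v, w)]"
  by (rule span_eq_scaled_relation) (unfold rel3_def, rule UnI2, blast)

lemma mult3_cong_left:
  assumes "xs \<approx> xs'"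
  shows "mult3 xs zs \<approx> mult3 xs' zs"
proof -
  have "concat (map (\<lambda>p. mult3 [p] zs) xs) \<approx> concat (map (\<lambda>p. mult3 [p] zs) xs')"
  proof (rule teq3_concat_map[OF assms[folded teq3_eq_span_eq]])
    fix u u' v w
    show "mult3 [(u + u', v, w)] zs \<approx> mult3 [(u, v, w)] zs @ mult3 [(u', v, w)] zs"
      unfolding mult3_single_left
      by (rule span_eq_map_add) (auto simp: split_beta distrib_right add_leg1)
  next
    fix u v v' w
    show "mult3 [(u, v + v', w)] zs \<approx> mult3 [(u, v, w)] zs @ mult3 [(u, v', w)] zs"
      unfolding mult3_single_left
      by (rule span_eq_map_add) (auto simp: split_beta distrib_right add_leg2)
  next
    fix u v w w'
    show "mult3 [(u, v, w + w')] zs \<approx> mult3 [(u, v, w)] zs @ mult3 [(u, v, w')] zs"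
      unfolding mult3_single_left
      by (rule span_eq_map_add) (auto simp: split_beta distrib_right add_leg3)
  next
    fix c u v w
    show "span_eq_scaled R3 c (mult3 [(smB c u, v, w)] zs) (mult3 [(u, v, w)] zs)"
      unfolding mult3_single_left
      by (rule span_eq_scaled_map) (auto simp: split_beta smB_mult_left[symmetric] smul_leg1)
  next
    fix c u v w
    show "span_eq_scaled R3 c (mult3 [(u, smA c v, w)] zs) (mult3 [(u, v, w)] zs)"
      unfolding mult3_single_left
      by (rule span_eq_scaled_map) (auto simp: split_beta smA_mult_left[symmetric] smul_leg2)
  next
    fix c u v w
    show "span_eq_scaled R3 c (mult3 [(u, v, smA c w)] zs) (mult3 [(u, v, w)] zs)"
      unfolding mult3_single_left
      by (rule span_eq_scaled_map) (auto simp: split_beta smA_mult_left[symmetric] smul_leg3)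
  qed
  then show ?thesis by (simp flip: mult3_eq_concat_left)
qed

lemma mult3_cong_right:
  assumes "xs \<approx> xs'"
  shows "mult3 zs xs \<approx> mult3 zs xs'"
proof -
  have "concat (map (\<lambda>p. mult3 zs [p]) xs) \<approx> concat (map (\<lambda>p. mult3 zs [p]) xs')"
  proof (rule teq3_concat_map[OF assms[folded teq3_eq_span_eq]])
    fix u u' v w
    show "mult3 zs [(u + u', v, w)] \<approx> mult3 zs [(u, v, w)] @ mult3 zs [(u', v, w)]"
      unfolding mult3_single_right
      by (rule span_eq_map_add) (auto simp: split_beta distrib_left add_leg1)
  next
    fix u v v' w
    show "mult3 zs [(u, v + v', w)] \<approx> mult3 zs [(u, v, w)] @ mult3 zs [(u, v', w)]"
      unfolding mult3_single_right
      by (rule span_eq_map_add) (auto simp: split_beta distrib_left add_leg2)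
  next
    fix u v w w'
    show "mult3 zs [(u, v, w + w')] \<approx> mult3 zs [(u, v, w)] @ mult3 zs [(u, v, w')]"
      unfolding mult3_single_right
      by (rule span_eq_map_add) (auto simp: split_beta distrib_left add_leg3)
  next
    fix c u v w
    show "span_eq_scaled R3 c (mult3 zs [(smB c u, v, w)]) (mult3 zs [(u, v, w)])"
      unfolding mult3_single_right
      by (rule span_eq_scaled_map) (auto simp: split_beta smB_mult_right[symmetric] smul_leg1)
  next
    fix c u v w
    show "span_eq_scaled R3 c (mult3 zs [(u, smA c v, w)]) (mult3 zs [(u, v, w)])"
      unfolding mult3_single_right
      by (rule span_eq_scaled_map) (auto simp: split_beta smA_mult_right[symmetric] smul_leg2)
  next
    fix c u v w
    show "span_eq_scaled R3 c (mult3 zs [(u, v, smA c w)]) (mult3 zs [(u, v, w)])"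
      unfolding mult3_single_right
      by (rule span_eq_scaled_map) (auto simp: split_beta smA_mult_right[symmetric] smul_leg3)
  qed
  then show ?thesis
    by (rule span_eq_trans[OF span_eq_trans[OF span_eq_if_mset_eq[OF mset_mult3_eq_concat_right]]
          span_eq_sym[OF span_eq_if_mset_eq[OF mset_mult3_eq_concat_right]]])
qed

lemma mult3_cong: "xs \<approx> xs' \<Longrightarrow> ys \<approx> ys' \<Longrightarrow> mult3 xs ys \<approx> mult3 xs' ys'"
  by (rule span_eq_trans[OF mult3_cong_left mult3_cong_right])

lemma mult3_concat_map_right:
  "mult3 zs (concat (map f xs)) \<approx> concat (map (\<lambda>x. mult3 zs (f x)) xs)"
  by (rule span_eq_if_mset_eq[OF mset_mult3_concat_map_right])

definition smul3 :: "'k \<Rightarrow> ('b \<times> 'a \<times> 'a) list \<Rightarrow> ('b \<times> 'a \<times> 'a) list" where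
  "smul3 c xs = map (\<lambda>(b, x, y). (smB c b, x, y)) xs"

lemma smul3_scaled: "span_eq_scaled R3 c (smul3 c xs) xs"
proof -
  have "span_eq_scaled R3 c (map (\<lambda>(b, x, y). (smB c b, x, y)) xs) (map id xs)"
    by (rule span_eq_scaled_map)
      (auto simp: split_beta smul_leg1[of c "fst p" "fst (snd p)" "snd (snd p)" for p, simplified])
  then show ?thesis by (simp add: smul3_def)
qed

lemma smul3_cong: "xs \<approx> ys \<Longrightarrow> smul3 c xs \<approx> smul3 c ys"
  by (rule span_eq_if_scaled_eq[OF smul3_scaled span_eq_scaled_trans_right[OF span_eq_sym smul3_scaled]])

lemma smul3_zero: "smul3 0 xs \<approx> []"
  using smul3_scaled[of 0 xs] by (simp add: span_eq_scaled_def span_eq_def)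

lemma mult3_smul3_left: "mult3 (smul3 c xs) ys = smul3 c (mult3 xs ys)"
  by (induction xs) (auto simp: mult3_def smul3_def smB_mult_left map_concat split_beta comp_def)

lemma mult3_smul3_right: "mult3 xs (smul3 c ys) = smul3 c (mult3 xs ys)"
  by (induction xs) (auto simp: mult3_def smul3_def smB_mult_right map_concat split_beta comp_def)

lemma leg12_scale2: "leg12 (scale2 smB c xs) = smul3 c (leg12 xs)"
  by (simp add: leg12_def scale2_def smul3_def split_beta)

lemma leg13_scale2: "leg13 (scale2 smB c xs) = smul3 c (leg13 xs)"
  by (simp add: leg13_def scale2_def smul3_def split_beta)

lemma leg12_cong:
  assumes "teq2 smB smA xs ys"
  shows "leg12 xs \<approx> leg12 ys"
proof -
  have "concat (map (\<lambda>(b, x). [(b, x, 1)]) xs) \<approx> concat (map (\<lambda>(b, x). [(b, x, 1)]) ys)"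
    by (rule teq2_concat_map[OF assms]) (auto simp: add_leg1 add_leg2 smul_leg1 smul_leg2)
  then show ?thesis by (simp only: leg12_def concat_map_case_single)
qed

lemma leg13_cong:
  assumes "teq2 smB smA xs ys"
  shows "leg13 xs \<approx> leg13 ys"
proof -
  have "concat (map (\<lambda>(b, x). [(b, 1, x)]) xs) \<approx> concat (map (\<lambda>(b, x). [(b, 1, x)]) ys)"
    by (rule teq2_concat_map[OF assms]) (auto simp: add_leg1 add_leg3 smul_leg1 smul_leg3)
  then show ?thesis by (simp only: leg13_def concat_map_case_single)
qed

lemma prefix_cong:
  assumes "teq2 smA smA xs ys"
  shows "map (\<lambda>(y, z). (b, y, z)) xs \<approx> map (\<lambda>(y, z). (b, y, z)) ys"
proof -
  have "concat (map (\<lambda>(y, z). [(b, y, z)]) xs) \<approx> concat (map (\<lambda>(y, z). [(b, y, z)]) ys)"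
    by (rule teq2_concat_map[OF assms]) (auto simp: add_leg2 add_leg3 smul_leg2 smul_leg3)
  then show ?thesis by (simp only: concat_map_case_single)
qed

lemma id_tensor_cong:
  assumes "teq2 smB smA xs ys"
    and D_add: "\<And>x y. teq2 smA smA (D (x + y)) (D x @ D y)"
    and D_smul: "\<And>c x. teq2 smA smA (D (smA c x)) (scale2 smA c (D x))"
  shows "id_tensor D xs \<approx> id_tensor D ys"
  unfolding id_tensor_eq_concat_map
proof (rule teq2_concat_map[OF assms(1)])
  fix u u' v
  show "id_tensor_simple D (u + u', v) \<approx> id_tensor_simple D (u, v) @ id_tensor_simple D (u', v)"
    unfolding id_tensor_simple_Pair by (rule span_eq_map_add) (auto simp: split_beta add_leg1)
next
  fix u v v'
  show "id_tensor_simple D (u, v + v') \<approx> id_tensor_simple D (u, v) @ id_tensor_simple D (u, v')"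
    unfolding id_tensor_simple_Pair using prefix_cong[OF D_add] by simp
next
  fix c u v
  show "span_eq_scaled R3 c (id_tensor_simple D (smB c u, v)) (id_tensor_simple D (u, v))"
    unfolding id_tensor_simple_Pair by (rule span_eq_scaled_map) (auto simp: split_beta smul_leg1)
next
  fix c u v
  have "span_eq_scaled R3 c (map (\<lambda>(y, z). (u, y, z)) (scale2 smA c (D v))) (id_tensor_simple D (u, v))"
    unfolding id_tensor_simple_Pair scale2_def
    by (simp add: comp_def split_beta, rule span_eq_scaled_map) (auto simp: split_beta smul_leg2)
  then show "span_eq_scaled R3 c (id_tensor_simple D (u, smA c v)) (id_tensor_simple D (u, v))"
    unfolding id_tensor_simple_Pair using prefix_cong[OF D_smul] span_eq_scaled_trans_left by fastforce
qed

lemma id_tensor_mult2: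
  assumes D_mult: "\<And>x y. teq2 smA smA (D (x * y)) (mult2 (D x) (D y))"
  shows "id_tensor D (mult2 xs ys) \<approx> mult3 (id_tensor D xs) (id_tensor D ys)"
proof -
  let ?G = "id_tensor_simple D"
  have G_mult: "?G (b * b', x * x') \<approx> mult3 (?G (b, x)) (?G (b', x'))" for b b' x x'
    unfolding id_tensor_simple_Pair by (subst mult2_prefix[symmetric]) (rule prefix_cong[OF D_mult])
  have "id_tensor D (mult2 xs ys) =
      concat (map (\<lambda>p. concat (map (\<lambda>q. ?G (fst p * fst q, snd p * snd q)) ys)) xs)"
    unfolding id_tensor_eq_concat_map mult2_eq_concat_map by (induction xs) (simp_all add: comp_def)
  also have "\<dots> \<approx> concat (map (\<lambda>p. concat (map (\<lambda>q. mult3 (?G p) (?G q)) ys)) xs)"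
    by (intro span_eq_concat_map) (metis G_mult prod.collapse)
  also have "\<dots> \<approx> concat (map (\<lambda>p. mult3 (?G p) (concat (map ?G ys))) xs)"
    by (intro span_eq_concat_map span_eq_sym[OF mult3_concat_map_right])
  also have "\<dots> = mult3 (id_tensor D xs) (id_tensor D ys)"
    by (simp add: id_tensor_eq_concat_map mult3_concat_map_left)
  finally show ?thesis .
qed

definition linear3 :: "('k \<Rightarrow> 'x::ring \<Rightarrow> 'x) \<Rightarrow> ('x \<Rightarrow> ('b \<times> 'a \<times> 'a) list) \<Rightarrow> bool" where
  "linear3 sm Y \<longleftrightarrow> (\<forall>x y. Y (x + y) \<approx> Y x @ Y y) \<and> (\<forall>c x. Y (sm c x) \<approx> smul3 c (Y x))"

lemma linear3I:
  "(\<And>x y. Y (x + y) \<approx> Y x @ Y y) \<Longrightarrow> (\<And>c x. Y (sm c x) \<approx> smul3 c (Y x)) \<Longrightarrow> linear3 sm Y"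
  by (simp add: linear3_def)

lemma linear3_add: "linear3 sm Y \<Longrightarrow> Y (x + y) \<approx> Y x @ Y y"
  by (simp add: linear3_def)

lemma linear3_smul: "linear3 sm Y \<Longrightarrow> Y (sm c x) \<approx> smul3 c (Y x)"
  by (simp add: linear3_def)

lemma linear3_smul_scaled: "linear3 sm Y \<Longrightarrow> span_eq_scaled R3 c (Y (sm c x)) (Y x)"
  using linear3_smul smul3_scaled span_eq_scaled_trans_left by blast

lemma linear3_mult_right: "linear3 sm Y \<Longrightarrow> linear3 sm (\<lambda>x. mult3 (Y x) zs)"
  by (rule linear3I)
    (auto simp: mult3_append_left mult3_smul3_left dest: linear3_add linear3_smul
      intro: mult3_cong_left[THEN span_eq_trans])

lemma linear3_mult_left: "linear3 sm Y \<Longrightarrow> linear3 sm (\<lambda>x. mult3 zs (Y x))"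
proof (rule linear3I)
  fix x y assume "linear3 sm Y"
  then have "mult3 zs (Y (x + y)) \<approx> mult3 zs (Y x @ Y y)" by (intro mult3_cong_right linear3_add)
  also have "\<dots> \<approx> mult3 zs (Y x) @ mult3 zs (Y y)"
    by (rule span_eq_if_mset_eq[OF mset_mult3_append_right])
  finally show "mult3 zs (Y (x + y)) \<approx> mult3 zs (Y x) @ mult3 zs (Y y)" .
next
  fix c x assume "linear3 sm Y"
  then show "mult3 zs (Y (sm c x)) \<approx> smul3 c (mult3 zs (Y x))"
    by (metis linear3_smul mult3_cong_right mult3_smul3_right)
qed

lemma linear3_sum_list:
  assumes "kalg sm" "linear3 sm Y"
  shows "Y (sum_list xs) \<approx> concat (map Y xs)"
proof (induction xs)
  case Nil
  have "Y 0 = Y (sm 0 0)" by (simp add: kalg_zero_smul[OF assms(1)])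
  also have "\<dots> \<approx> smul3 0 (Y 0)" by (rule linear3_smul[OF assms(2)])
  also have "\<dots> \<approx> []" by (rule smul3_zero)
  finally show ?case by simp
next
  case (Cons x xs)
  have "Y (sum_list (x # xs)) \<approx> Y x @ Y (sum_list xs)" using linear3_add[OF assms(2)] by simp
  also have "\<dots> \<approx> Y x @ concat (map Y xs)" by (rule span_eq_append[OF span_eq_refl Cons])
  finally show ?case by simp
qed

lemma teq2_concat_map_bilinear:
  assumes "teq2 sm sm xs ys" "\<And>v. linear3 sm (\<lambda>u. g (u, v))" "\<And>u. linear3 sm (\<lambda>v. g (u, v))"
  shows "concat (map g xs) \<approx> concat (map g ys)"
proof (rule teq2_concat_map[OF assms(1)])
  fix u u' v show "g (u + u', v) \<approx> g (u, v) @ g (u', v)"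
    by (rule linear3_add[OF assms(2)])
next
  fix u v v' show "g (u, v + v') \<approx> g (u, v) @ g (u, v')"
    by (rule linear3_add[OF assms(3)])
next
  fix c u v show "span_eq_scaled R3 c (g (sm c u, v)) (g (u, v))"
    by (rule linear3_smul_scaled[OF assms(2)])
next
  fix c u v show "span_eq_scaled R3 c (g (u, sm c v)) (g (u, v))"
    by (rule linear3_smul_scaled[OF assms(3)])
qed

lemma teq3_concat_map_trilinear:
  assumes "teq3 sm sm sm xs ys" "\<And>v w. linear3 sm (\<lambda>u. g (u, v, w))"
    "\<And>u w. linear3 sm (\<lambda>v. g (u, v, w))" "\<And>u v. linear3 sm (\<lambda>w. g (u, v, w))"
  shows "concat (map g xs) \<approx> concat (map g ys)"
proof (rule teq3_concat_map[OF assms(1)])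
  fix u u' v w show "g (u + u', v, w) \<approx> g (u, v, w) @ g (u', v, w)"
    by (rule linear3_add[OF assms(2)])
next
  fix u v v' w show "g (u, v + v', w) \<approx> g (u, v, w) @ g (u, v', w)"
    by (rule linear3_add[OF assms(3)])
next
  fix u v w w' show "g (u, v, w + w') \<approx> g (u, v, w) @ g (u, v, w')"
    by (rule linear3_add[OF assms(4)])
next
  fix c u v w show "span_eq_scaled R3 c (g (sm c u, v, w)) (g (u, v, w))"
    by (rule linear3_smul_scaled[OF assms(2)])
next
  fix c u v w show "span_eq_scaled R3 c (g (u, sm c v, w)) (g (u, v, w))"
    by (rule linear3_smul_scaled[OF assms(3)])
next
  fix c u v w show "span_eq_scaled R3 c (g (u, v, sm c w)) (g (u, v, w))"
    by (rule linear3_smul_scaled[OF assms(4)])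
qed

end

section \<open>Quantum families of homomorphisms\<close>

locale quantum_family =
  fixes sm1 :: "'k::field \<Rightarrow> 'a1::ring_1 \<Rightarrow> 'a1"
    and D1 :: "'a1 \<Rightarrow> ('a1 \<times> 'a1) list" and S1 :: "'a1 \<Rightarrow> 'a1" and eps1 :: "'a1 \<Rightarrow> 'k"
    and sm2 :: "'k \<Rightarrow> 'a2::ring_1 \<Rightarrow> 'a2"
    and D2 :: "'a2 \<Rightarrow> ('a2 \<times> 'a2) list" and S2 :: "'a2 \<Rightarrow> 'a2" and eps2 :: "'a2 \<Rightarrow> 'k"
    and smB :: "'k \<Rightarrow> 'b::ring \<Rightarrow> 'b" and oneB :: 'b
    and \<alpha> :: "'a1 \<Rightarrow> ('b \<times> 'a2) list"
  assumes hopf1: "hopf_algebra sm1 D1 S1 eps1"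
    and hopf2: "hopf_algebra sm2 D2 S2 eps2"
    and unital_B: "unital_kalg smB oneB"
    and family_hom: "quantum_family_hom sm1 D1 smB oneB sm2 D2 \<alpha>"
begin

sublocale tensor3_algebra smB sm2
  using unital_B hopf2 by unfold_locales (simp_all add: unital_kalg_def hopf_algebra_def)

notation tensor3_eq (infix "\<approx>" 50)

lemma oneB_mult_left: "oneB * x = x" and oneB_mult_right: "x * oneB = x"
  using unital_B by (simp_all add: unital_kalg_def)

lemma kalg_sm1: "kalg sm1"
  using hopf1 by (simp add: hopf_algebra_def)

lemma S1_add: "S1 (x + y) = S1 x + S1 y" and S1_smul: "S1 (sm1 c x) = sm1 c (S1 x)"
  using hopf1 by (simp_all add: hopf_algebra_def)

lemma D1_mult: "teq2 sm1 sm1 (D1 (x * y)) (mult2 (D1 x) (D1 y))"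
  using hopf1 by (simp add: hopf_algebra_def)

lemma D1_coassoc: "teq3 sm1 sm1 sm1 (tensor_id D1 (D1 x)) (id_tensor D1 (D1 x))"
  using hopf1 by (simp add: hopf_algebra_def)

lemma counit1_left: "sum_list [sm1 (eps1 a) b. (a, b) \<leftarrow> D1 x] = x"
  and counit1_right: "sum_list [sm1 (eps1 b) a. (a, b) \<leftarrow> D1 x] = x"
  using hopf1 by (simp_all add: hopf_algebra_def)

lemma antipode1_left: "sum_list [S1 a * b. (a, b) \<leftarrow> D1 x] = sm1 (eps1 x) 1"
  and antipode1_right: "sum_list [a * S1 b. (a, b) \<leftarrow> D1 x] = sm1 (eps1 x) 1"
  using hopf1 by (simp_all add: hopf_algebra_def)

lemma D2_add: "teq2 sm2 sm2 (D2 (x + y)) (D2 x @ D2 y)"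
  and D2_smul: "teq2 sm2 sm2 (D2 (sm2 c x)) (scale2 sm2 c (D2 x))"
  and D2_mult: "teq2 sm2 sm2 (D2 (x * y)) (mult2 (D2 x) (D2 y))"
  using hopf2 by (simp_all add: hopf_algebra_def)

lemma alpha_add: "teq2 smB sm2 (\<alpha> (x + y)) (\<alpha> x @ \<alpha> y)"
  and alpha_smul: "teq2 smB sm2 (\<alpha> (sm1 c x)) (scale2 smB c (\<alpha> x))"
  and alpha_mult: "teq2 smB sm2 (\<alpha> (x * y)) (mult2 (\<alpha> x) (\<alpha> y))"
  and alpha_one: "teq2 smB sm2 (\<alpha> 1) [(oneB, 1)]"
  using family_hom by (simp_all add: quantum_family_hom_def)

definition alpha12 :: "'a1 \<Rightarrow> ('b \<times> 'a2 \<times> 'a2) list" where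
  "alpha12 x = leg12 (\<alpha> x)"

definition alpha13 :: "'a1 \<Rightarrow> ('b \<times> 'a2 \<times> 'a2) list" where
  "alpha13 x = leg13 (\<alpha> x)"

definition alpha_comult :: "'a1 \<Rightarrow> ('b \<times> 'a2 \<times> 'a2) list" where
  "alpha_comult x = id_tensor D2 (\<alpha> x)"

lemma alpha12_alpha13_eq_alpha_comult:
  "concat (map (\<lambda>(u, v). mult3 (alpha12 u) (alpha13 v)) (D1 a)) \<approx> alpha_comult a"
  using family_hom
  by (simp add: quantum_family_hom_def teq3_eq_span_eq alpha12_def alpha13_def alpha_comult_def)

lemma linear3_alpha12: "linear3 sm1 alpha12"
  unfolding alpha12_def
  by (rule linear3I) (metis alpha_add leg12_cong leg12_append, metis alpha_smul leg12_cong leg12_scale2)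

lemma linear3_alpha13: "linear3 sm1 alpha13"
  unfolding alpha13_def
  by (rule linear3I) (metis alpha_add leg13_cong leg13_append, metis alpha_smul leg13_cong leg13_scale2)

lemma alpha12_mult: "alpha12 (x * y) \<approx> mult3 (alpha12 x) (alpha12 y)"
  unfolding alpha12_def by (metis alpha_mult leg12_cong leg12_mult2)

lemma alpha13_mult: "alpha13 (x * y) \<approx> mult3 (alpha13 x) (alpha13 y)"
  unfolding alpha13_def by (metis alpha_mult leg13_cong leg13_mult2)

lemma alpha12_one: "alpha12 1 \<approx> [(oneB, 1, 1)]"
  unfolding alpha12_def using leg12_cong[OF alpha_one] by (simp add: leg12_def)

lemma alpha13_one: "alpha13 1 \<approx> [(oneB, 1, 1)]"
  unfolding alpha13_def using leg13_cong[OF alpha_one] by (simp add: leg13_def)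

lemma alpha_comult_mult: "alpha_comult (x * y) \<approx> mult3 (alpha_comult x) (alpha_comult y)"
  unfolding alpha_comult_def
  using id_tensor_cong[where D = D2, OF alpha_mult D2_add D2_smul] id_tensor_mult2[where D = D2, OF D2_mult]
  by (rule span_eq_trans)

lemma linear3_antipode: "linear3 sm1 Y \<Longrightarrow> linear3 sm1 (\<lambda>x. Y (S1 x))"
  by (simp add: linear3_def S1_add S1_smul)

lemma linear3_counit_left:
  assumes "linear3 sm1 Y"
  shows "Y a \<approx> concat (map (\<lambda>(u, v). smul3 (eps1 u) (Y v)) (D1 a))"
proof -
  have "Y a = Y (sum_list (map (\<lambda>(u, v). sm1 (eps1 u) v) (D1 a)))"
    using counit1_left[of a] by simp
  also have "\<dots> \<approx> concat (map Y (map (\<lambda>(u, v). sm1 (eps1 u) v) (D1 a)))"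
    by (rule linear3_sum_list[OF kalg_sm1 assms])
  also have "\<dots> \<approx> concat (map (\<lambda>(u, v). smul3 (eps1 u) (Y v)) (D1 a))"
    by (simp add: comp_def case_prod_unfold) (intro span_eq_concat_map linear3_smul[OF assms])
  finally show ?thesis .
qed

lemma linear3_counit_right:
  assumes "linear3 sm1 Y"
  shows "Y a \<approx> concat (map (\<lambda>(u, v). smul3 (eps1 v) (Y u)) (D1 a))"
proof -
  have "Y a = Y (sum_list (map (\<lambda>(u, v). sm1 (eps1 v) u) (D1 a)))"
    using counit1_right[of a] by simp
  also have "\<dots> \<approx> concat (map Y (map (\<lambda>(u, v). sm1 (eps1 v) u) (D1 a)))"
    by (rule linear3_sum_list[OF kalg_sm1 assms])
  also have "\<dots> \<approx> concat (map (\<lambda>(u, v). smul3 (eps1 v) (Y u)) (D1 a))"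
    by (simp add: comp_def case_prod_unfold) (intro span_eq_concat_map linear3_smul[OF assms])
  finally show ?thesis .
qed

lemma alpha12_antipode:
  "concat (map (\<lambda>(b1, b2). mult3 (alpha12 (S1 b1)) (alpha12 b2)) (D1 u)) \<approx> smul3 (eps1 u) [(oneB, 1, 1)]"
proof -
  have "concat (map (\<lambda>(b1, b2). mult3 (alpha12 (S1 b1)) (alpha12 b2)) (D1 u))
      \<approx> concat (map alpha12 (map (\<lambda>(b1, b2). S1 b1 * b2) (D1 u)))"
    by (simp add: comp_def case_prod_unfold) (intro span_eq_concat_map span_eq_sym[OF alpha12_mult])
  also have "\<dots> \<approx> alpha12 (sum_list (map (\<lambda>(b1, b2). S1 b1 * b2) (D1 u)))"
    by (rule span_eq_sym[OF linear3_sum_list[OF kalg_sm1 linear3_alpha12]])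
  also have "\<dots> = alpha12 (sm1 (eps1 u) 1)"
    using antipode1_left[of u] by simp
  also have "\<dots> \<approx> smul3 (eps1 u) [(oneB, 1, 1)]"
    by (rule span_eq_trans[OF linear3_smul[OF linear3_alpha12] smul3_cong[OF alpha12_one]])
  finally show ?thesis .
qed

lemma alpha13_antipode:
  "concat (map (\<lambda>(b1, b2). mult3 (alpha13 b1) (alpha13 (S1 b2))) (D1 u)) \<approx> smul3 (eps1 u) [(oneB, 1, 1)]"
proof -
  have "concat (map (\<lambda>(b1, b2). mult3 (alpha13 b1) (alpha13 (S1 b2))) (D1 u))
      \<approx> concat (map alpha13 (map (\<lambda>(b1, b2). b1 * S1 b2) (D1 u)))"
    by (simp add: comp_def case_prod_unfold) (intro span_eq_concat_map span_eq_sym[OF alpha13_mult])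
  also have "\<dots> \<approx> alpha13 (sum_list (map (\<lambda>(b1, b2). b1 * S1 b2) (D1 u)))"
    by (rule span_eq_sym[OF linear3_sum_list[OF kalg_sm1 linear3_alpha13]])
  also have "\<dots> = alpha13 (sm1 (eps1 u) 1)"
    using antipode1_right[of u] by simp
  also have "\<dots> \<approx> smul3 (eps1 u) [(oneB, 1, 1)]"
    by (rule span_eq_trans[OF linear3_smul[OF linear3_alpha13] smul3_cong[OF alpha13_one]])
  finally show ?thesis .
qed

lemma antipode_cancel_left:
  assumes Y: "linear3 sm1 Y"
  shows "concat (map (\<lambda>(u, v). concat (map (\<lambda>(c1, c2).
      mult3 (mult3 (alpha12 (S1 u)) (alpha12 c1)) (Y c2)) (D1 v))) (D1 a)) \<approx> Y a"
proof -
  define g where "g = (\<lambda>(x, y, z). mult3 (mult3 (alpha12 (S1 x)) (alpha12 y)) (Y z))"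
  have "concat (map (\<lambda>(u, v). concat (map (\<lambda>(c1, c2).
      mult3 (mult3 (alpha12 (S1 u)) (alpha12 c1)) (Y c2)) (D1 v))) (D1 a))
      = concat (map g (id_tensor D1 (D1 a)))"
    by (simp add: concat_map_id_tensor g_def)
  also have "\<dots> \<approx> concat (map g (tensor_id D1 (D1 a)))"
  proof (rule span_eq_sym, rule teq3_concat_map_trilinear[OF D1_coassoc])
    fix v w show "linear3 sm1 (\<lambda>u. g (u, v, w))"
      unfolding g_def
      using linear3_mult_right[OF linear3_mult_right[OF linear3_antipode[OF linear3_alpha12]]]
      by simp
  next
    fix u w show "linear3 sm1 (\<lambda>v. g (u, v, w))"
      unfolding g_def using linear3_mult_right[OF linear3_mult_left[OF linear3_alpha12]] by simp
  next
    fix u v show "linear3 sm1 (\<lambda>w. g (u, v, w))"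
      unfolding g_def using linear3_mult_left[OF Y] by simp
  qed
  also have "\<dots> = concat (map (\<lambda>(u, v). mult3 (concat (map (\<lambda>(b1, b2).
      mult3 (alpha12 (S1 b1)) (alpha12 b2)) (D1 u))) (Y v)) (D1 a))"
    by (simp add: concat_map_tensor_id g_def mult3_concat_map_left case_prod_unfold)
  also have "\<dots> \<approx> concat (map (\<lambda>(u, v). mult3 (smul3 (eps1 u) [(oneB, 1, 1)]) (Y v)) (D1 a))"
    by (intro span_eq_concat_map) (auto intro: mult3_cong_left alpha12_antipode)
  also have "\<dots> = concat (map (\<lambda>(u, v). smul3 (eps1 u) (Y v)) (D1 a))"
    by (simp add: mult3_smul3_left mult3_unit_left oneB_mult_left)
  also have "\<dots> \<approx> Y a"
    by (rule span_eq_sym[OF linear3_counit_left[OF Y]])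
  finally show ?thesis .
qed

lemma antipode_cancel_right:
  assumes Z: "linear3 sm1 Z"
  shows "concat (map (\<lambda>(u, v). concat (map (\<lambda>(d1, d2).
      mult3 (mult3 (Z d1) (alpha13 d2)) (alpha13 (S1 v))) (D1 u))) (D1 a)) \<approx> Z a"
proof -
  define g where "g = (\<lambda>(x, y, z). mult3 (mult3 (Z x) (alpha13 y)) (alpha13 (S1 z)))"
  have "concat (map (\<lambda>(u, v). concat (map (\<lambda>(d1, d2).
      mult3 (mult3 (Z d1) (alpha13 d2)) (alpha13 (S1 v))) (D1 u))) (D1 a))
      = concat (map g (tensor_id D1 (D1 a)))"
    by (simp add: concat_map_tensor_id g_def)
  also have "\<dots> \<approx> concat (map g (id_tensor D1 (D1 a)))"
  proof (rule teq3_concat_map_trilinear[OF D1_coassoc])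
    fix v w show "linear3 sm1 (\<lambda>u. g (u, v, w))"
      unfolding g_def using linear3_mult_right[OF linear3_mult_right[OF Z]] by simp
  next
    fix u w show "linear3 sm1 (\<lambda>v. g (u, v, w))"
      unfolding g_def using linear3_mult_right[OF linear3_mult_left[OF linear3_alpha13]] by simp
  next
    fix u v show "linear3 sm1 (\<lambda>w. g (u, v, w))"
      unfolding g_def using linear3_mult_left[OF linear3_antipode[OF linear3_alpha13]]
      by simp
  qed
  also have "\<dots> = concat (map (\<lambda>(u, v). concat (map (\<lambda>(e1, e2).
      mult3 (Z u) (mult3 (alpha13 e1) (alpha13 (S1 e2)))) (D1 v))) (D1 a))"
    by (simp add: concat_map_id_tensor g_def mult3_assoc)
  also have "\<dots> \<approx> concat (map (\<lambda>(u, v). mult3 (Z u) (concat (map (\<lambda>(e1, e2).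
      mult3 (alpha13 e1) (alpha13 (S1 e2))) (D1 v)))) (D1 a))"
    by (intro span_eq_concat_map)
      (auto simp: case_prod_unfold intro: span_eq_sym[OF mult3_concat_map_right])
  also have "\<dots> \<approx> concat (map (\<lambda>(u, v). mult3 (Z u) (smul3 (eps1 v) [(oneB, 1, 1)])) (D1 a))"
    by (intro span_eq_concat_map) (auto intro: mult3_cong_right alpha13_antipode)
  also have "\<dots> = concat (map (\<lambda>(u, v). smul3 (eps1 v) (Z u)) (D1 a))"
    by (simp add: mult3_smul3_right mult3_unit_right oneB_mult_right)
  also have "\<dots> \<approx> Z a"
    by (rule span_eq_sym[OF linear3_counit_right[OF Z]])
  finally show ?thesis .
qed

lemma alpha13_expand:
  "alpha13 a \<approx> concat (map (\<lambda>(u, v). mult3 (alpha12 (S1 u)) (alpha_comult v)) (D1 a))"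
proof -
  have "alpha13 a \<approx> concat (map (\<lambda>(u, v). concat (map (\<lambda>(c1, c2).
      mult3 (mult3 (alpha12 (S1 u)) (alpha12 c1)) (alpha13 c2)) (D1 v))) (D1 a))"
    by (rule span_eq_sym[OF antipode_cancel_left[OF linear3_alpha13]])
  also have "\<dots> = concat (map (\<lambda>(u, v). concat (map (\<lambda>(c1, c2).
      mult3 (alpha12 (S1 u)) (mult3 (alpha12 c1) (alpha13 c2))) (D1 v))) (D1 a))"
    by (simp add: mult3_assoc)
  also have "\<dots> \<approx> concat (map (\<lambda>(u, v). mult3 (alpha12 (S1 u)) (concat (map (\<lambda>(c1, c2).
      mult3 (alpha12 c1) (alpha13 c2)) (D1 v)))) (D1 a))"
    by (intro span_eq_concat_map)
      (auto simp: case_prod_unfold intro: span_eq_sym[OF mult3_concat_map_right])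
  also have "\<dots> \<approx> concat (map (\<lambda>(u, v). mult3 (alpha12 (S1 u)) (alpha_comult v)) (D1 a))"
    by (intro span_eq_concat_map) (auto intro: mult3_cong_right alpha12_alpha13_eq_alpha_comult)
  finally show ?thesis .
qed

lemma alpha12_expand:
  "alpha12 a \<approx> concat (map (\<lambda>(u, v). mult3 (alpha_comult u) (alpha13 (S1 v))) (D1 a))"
proof -
  have "alpha12 a \<approx> concat (map (\<lambda>(u, v). concat (map (\<lambda>(d1, d2).
      mult3 (mult3 (alpha12 d1) (alpha13 d2)) (alpha13 (S1 v))) (D1 u))) (D1 a))"
    by (rule span_eq_sym[OF antipode_cancel_right[OF linear3_alpha12]])
  also have "\<dots> = concat (map (\<lambda>(u, v). mult3 (concat (map (\<lambda>(d1, d2).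
      mult3 (alpha12 d1) (alpha13 d2)) (D1 u))) (alpha13 (S1 v))) (D1 a))"
    by (simp add: mult3_concat_map_left case_prod_unfold)
  also have "\<dots> \<approx> concat (map (\<lambda>(u, v). mult3 (alpha_comult u) (alpha13 (S1 v))) (D1 a))"
    by (intro span_eq_concat_map) (auto intro: mult3_cong_left alpha12_alpha13_eq_alpha_comult)
  finally show ?thesis .
qed

lemma alpha_comult_mult_expand:
  "alpha_comult (x * y) \<approx> concat (map (\<lambda>c. concat (map (\<lambda>d.
    mult3 (mult3 (mult3 (alpha12 (fst c)) (alpha12 (fst d))) (alpha13 (snd c))) (alpha13 (snd d)))
    (D1 y))) (D1 x))"
proof -
  define g where "g = (\<lambda>(u, v). mult3 (alpha12 u) (alpha13 v))"
  have "alpha_comult (x * y) \<approx> concat (map g (D1 (x * y)))"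
    unfolding g_def by (rule span_eq_sym[OF alpha12_alpha13_eq_alpha_comult])
  also have "\<dots> \<approx> concat (map g (mult2 (D1 x) (D1 y)))"
  proof (rule teq2_concat_map_bilinear[OF D1_mult])
    fix v show "linear3 sm1 (\<lambda>u. g (u, v))"
      unfolding g_def using linear3_mult_right[OF linear3_alpha12] by simp
  next
    fix u show "linear3 sm1 (\<lambda>v. g (u, v))"
      unfolding g_def using linear3_mult_left[OF linear3_alpha13] by simp
  qed
  also have "\<dots> = concat (map (\<lambda>c. concat (map (\<lambda>d.
      mult3 (alpha12 (fst c * fst d)) (alpha13 (snd c * snd d))) (D1 y))) (D1 x))"
    by (simp add: mult2_eq_concat_map g_def map_concat comp_def concat_concat_map_map)
  also have "\<dots> \<approx> concat (map (\<lambda>c. concat (map (\<lambda>d.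
    mult3 (mult3 (mult3 (alpha12 (fst c)) (alpha12 (fst d))) (alpha13 (snd c))) (alpha13 (snd d)))
    (D1 y))) (D1 x))"
    by (intro span_eq_concat_map, subst mult3_assoc, rule mult3_cong[OF alpha12_mult alpha13_mult])
  finally show ?thesis .
qed

text \<open>Expanding \<open>(S u)\<^sub>1\<^sub>2 T(v) T(u') (S v')\<^sub>1\<^sub>3\<close> gives
  \<open>\<Sigma> (S u)\<^sub>1\<^sub>2 v(1)\<^sub>1\<^sub>2 middle (u'(1), u'(2)) v' v(2)\<close>;
  in this order the antipode can cancel \<open>(S u)\<^sub>1\<^sub>2 v(1)\<^sub>1\<^sub>2\<close>.\<close>
definition middle :: "'a1 \<times> 'a1 \<Rightarrow> 'a1 \<Rightarrow> 'a1 \<Rightarrow> ('b \<times> 'a2 \<times> 'a2) list" where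
  "middle d w x = mult3 (mult3 (mult3 (alpha12 (fst d)) (alpha13 x)) (alpha13 (snd d))) (alpha13 (S1 w))"

lemma linear3_middle: "linear3 sm1 (middle d w)"
  unfolding middle_def[abs_def] by (intro linear3_mult_right linear3_mult_left linear3_alpha13)

lemma sandwich_expand:
  "mult3 (mult3 (alpha12 (S1 u)) (alpha_comult v)) (mult3 (alpha_comult u') (alpha13 (S1 v'))) \<approx>
   concat (map (\<lambda>c. concat (map (\<lambda>d.
     mult3 (mult3 (alpha12 (S1 u)) (alpha12 (fst c))) (middle d v' (snd c))) (D1 u'))) (D1 v))"
proof -
  have "mult3 (mult3 (alpha12 (S1 u)) (alpha_comult v)) (mult3 (alpha_comult u') (alpha13 (S1 v')))
      = mult3 (alpha12 (S1 u)) (mult3 (mult3 (alpha_comult v) (alpha_comult u')) (alpha13 (S1 v')))"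
    by (simp add: mult3_assoc)
  also have "\<dots> \<approx> mult3 (alpha12 (S1 u)) (mult3 (alpha_comult (v * u')) (alpha13 (S1 v')))"
    by (intro mult3_cong_right mult3_cong_left span_eq_sym[OF alpha_comult_mult])
  also have "\<dots> \<approx> mult3 (alpha12 (S1 u)) (mult3 (concat (map (\<lambda>c. concat (map (\<lambda>d.
      mult3 (mult3 (mult3 (alpha12 (fst c)) (alpha12 (fst d))) (alpha13 (snd c))) (alpha13 (snd d)))
      (D1 u'))) (D1 v))) (alpha13 (S1 v')))"
    by (intro mult3_cong_right mult3_cong_left alpha_comult_mult_expand)
  also have "\<dots> = mult3 (alpha12 (S1 u)) (concat (map (\<lambda>c. concat (map (\<lambda>d.
      mult3 (mult3 (mult3 (mult3 (alpha12 (fst c)) (alpha12 (fst d))) (alpha13 (snd c)))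
        (alpha13 (snd d))) (alpha13 (S1 v'))) (D1 u'))) (D1 v)))"
    by (simp add: mult3_concat_map_left)
  also have "\<dots> \<approx> concat (map (\<lambda>c. mult3 (alpha12 (S1 u)) (concat (map (\<lambda>d.
      mult3 (mult3 (mult3 (mult3 (alpha12 (fst c)) (alpha12 (fst d))) (alpha13 (snd c)))
        (alpha13 (snd d))) (alpha13 (S1 v'))) (D1 u')))) (D1 v))"
    by (rule mult3_concat_map_right)
  also have "\<dots> \<approx> concat (map (\<lambda>c. concat (map (\<lambda>d. mult3 (alpha12 (S1 u)) (
      mult3 (mult3 (mult3 (mult3 (alpha12 (fst c)) (alpha12 (fst d))) (alpha13 (snd c)))
        (alpha13 (snd d))) (alpha13 (S1 v')))) (D1 u'))) (D1 v))"
    by (intro span_eq_concat_map mult3_concat_map_right)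
  also have "\<dots> = concat (map (\<lambda>c. concat (map (\<lambda>d.
      mult3 (mult3 (alpha12 (S1 u)) (alpha12 (fst c))) (middle d v' (snd c))) (D1 u'))) (D1 v))"
    by (simp add: middle_def mult3_assoc)
  finally show ?thesis .
qed

lemma alpha13_alpha12_commute: "mult3 (alpha13 a) (alpha12 a') \<approx> mult3 (alpha12 a') (alpha13 a)"
proof -
  let ?K = "\<lambda>p q c d. mult3 (mult3 (alpha12 (S1 (fst p))) (alpha12 (fst c))) (middle d (snd q) (snd c))"
  have "mult3 (alpha13 a) (alpha12 a') \<approx>
      mult3 (concat (map (\<lambda>(u, v). mult3 (alpha12 (S1 u)) (alpha_comult v)) (D1 a)))
            (concat (map (\<lambda>(u, v). mult3 (alpha_comult u) (alpha13 (S1 v))) (D1 a')))"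
    by (intro mult3_cong alpha13_expand alpha12_expand)
  also have "\<dots> \<approx> concat (map (\<lambda>p. concat (map (\<lambda>q.
      mult3 (mult3 (alpha12 (S1 (fst p))) (alpha_comult (snd p)))
            (mult3 (alpha_comult (fst q)) (alpha13 (S1 (snd q))))) (D1 a'))) (D1 a))"
    by (simp add: mult3_concat_map_left case_prod_unfold)
      (intro span_eq_concat_map mult3_concat_map_right)
  also have "\<dots> \<approx> concat (map (\<lambda>p. concat (map (\<lambda>q. concat (map (\<lambda>c. concat (map (\<lambda>d.
      ?K p q c d) (D1 (fst q)))) (D1 (snd p)))) (D1 a'))) (D1 a))"
    by (intro span_eq_concat_map sandwich_expand)
  also have "\<dots> \<approx> concat (map (\<lambda>p. concat (map (\<lambda>q. concat (map (\<lambda>d. concat (map (\<lambda>c.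
      ?K p q c d) (D1 (snd p)))) (D1 (fst q)))) (D1 a'))) (D1 a))"
    by (intro span_eq_concat_map span_eq_concat_map_swap)
  also have "\<dots> \<approx> concat (map (\<lambda>q. concat (map (\<lambda>p. concat (map (\<lambda>d. concat (map (\<lambda>c.
      ?K p q c d) (D1 (snd p)))) (D1 (fst q)))) (D1 a))) (D1 a'))"
    by (rule span_eq_concat_map_swap)
  also have "\<dots> \<approx> concat (map (\<lambda>q. concat (map (\<lambda>d. concat (map (\<lambda>p. concat (map (\<lambda>c.
      ?K p q c d) (D1 (snd p)))) (D1 a))) (D1 (fst q)))) (D1 a'))"
    by (intro span_eq_concat_map span_eq_concat_map_swap)
  also have "\<dots> \<approx> concat (map (\<lambda>q. concat (map (\<lambda>d. middle d (snd q) a) (D1 (fst q)))) (D1 a'))"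
  proof (intro span_eq_concat_map)
    fix q d :: "'a1 \<times> 'a1"
    have "concat (map (\<lambda>(u, v). concat (map (\<lambda>(c1, c2).
        mult3 (mult3 (alpha12 (S1 u)) (alpha12 c1)) (middle d (snd q) c2)) (D1 v))) (D1 a))
        \<approx> middle d (snd q) a"
      by (rule antipode_cancel_left[OF linear3_middle])
    then show "concat (map (\<lambda>p. concat (map (\<lambda>c. ?K p q c d) (D1 (snd p)))) (D1 a))
        \<approx> middle d (snd q) a"
      by (simp add: case_prod_unfold)
  qed
  also have "\<dots> \<approx> mult3 (alpha12 a') (alpha13 a)"
  proof -
    have "concat (map (\<lambda>(u, v). concat (map (\<lambda>(d1, d2).
        mult3 (mult3 ((\<lambda>x. mult3 (alpha12 x) (alpha13 a)) d1) (alpha13 d2)) (alpha13 (S1 v)))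
        (D1 u))) (D1 a')) \<approx> (\<lambda>x. mult3 (alpha12 x) (alpha13 a)) a'"
      by (rule antipode_cancel_right[OF linear3_mult_right[OF linear3_alpha12]])
    then show ?thesis by (simp add: middle_def case_prod_unfold)
  qed
  finally show ?thesis .
qed

end

theorem theorem3p5:
  fixes sm1 :: "'k::field \<Rightarrow> 'a1::ring_1 \<Rightarrow> 'a1"
    and D1 :: "'a1 \<Rightarrow> ('a1 \<times> 'a1) list" and S1 :: "'a1 \<Rightarrow> 'a1" and eps1 :: "'a1 \<Rightarrow> 'k"
    and sm2 :: "'k \<Rightarrow> 'a2::ring_1 \<Rightarrow> 'a2"
    and D2 :: "'a2 \<Rightarrow> ('a2 \<times> 'a2) list" and S2 :: "'a2 \<Rightarrow> 'a2" and eps2 :: "'a2 \<Rightarrow> 'k"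
    and smB :: "'k \<Rightarrow> 'b::ring \<Rightarrow> 'b" and oneB :: 'b
    and \<alpha> :: "'a1 \<Rightarrow> ('b \<times> 'a2) list"
  assumes "hopf_algebra sm1 D1 S1 eps1"
    and "hopf_algebra sm2 D2 S2 eps2"
    and "unital_kalg smB oneB"
    and "quantum_family_hom sm1 D1 smB oneB sm2 D2 \<alpha>"
  shows "\<forall>a a'. teq3 smB sm2 sm2 (mult3 (leg12 (\<alpha> a)) (leg13 (\<alpha> a')))
                                   (mult3 (leg13 (\<alpha> a')) (leg12 (\<alpha> a)))"
proof (intro allI)
  fix a a'
  interpret quantum_family sm1 D1 S1 eps1 sm2 D2 S2 eps2 smB oneB \<alpha>
    using assms by unfold_locales
  show "teq3 smB sm2 sm2 (mult3 (leg12 (\<alpha> a)) (leg13 (\<alpha> a')))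
                         (mult3 (leg13 (\<alpha> a')) (leg12 (\<alpha> a)))"
    using span_eq_sym[OF alpha13_alpha12_commute[of a' a]]
    by (simp only: teq3_eq_span_eq alpha12_def alpha13_def)
qed

end
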